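(* Neither of the real simple Lie algebras $so(3)$ and $sl(2,\mathbb R)$ admits a realization as a Lie algebra of Lie point symmetry generators of an equation $u_{tx}=g(t,x)u_x+f(t,x,u)$ with $g_x\neq0$, $f_{uu}\neq0$; that is, there are no three vector fields of the form $\tau(t)\partial_t+\xi(x)\partial_x+[h(t)u+r(t,x)]\partial_u$ that are symmetries of such an equation and satisfy the commutation relations of $so(3)$ or of $sl(2,\mathbb R)$.
   Context: Lie point symmetry generators of equations $u_{tx}=g(t,x)u_x+f(t,x,u)$ ($g_x\neq0$, $f_{uu}\neq0$) are vector fields of the form $\tau(t)\partial_t+\xi(x)\partial_x+[h(t)u+r(t,x)]\partial_u$. All functions are smooth and considerations are local. *)

theory Defs
  imports "HOL-Analysis.Analysis"
begin

type_synonym fn3 = "real \<Rightarrow> real \<Rightarrow> real \<Rightarrow> real"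

text \<open>A vector field tau d/dt + xi d/dx + eta d/du, given by its components (tau, xi, eta).\<close>
type_synonym vfield = "fn3 \<times> fn3 \<times> fn3"

definition Dt :: "fn3 \<Rightarrow> fn3" where
  "Dt F = (\<lambda>t x u. deriv (\<lambda>s. F s x u) t)"
definition Dx :: "fn3 \<Rightarrow> fn3" where
  "Dx F = (\<lambda>t x u. deriv (\<lambda>y. F t y u) x)"
definition Du :: "fn3 \<Rightarrow> fn3" where
  "Du F = (\<lambda>t x u. deriv (\<lambda>v. F t x v) u)"

definition pdir :: "nat \<Rightarrow> fn3 \<Rightarrow> fn3" where
  "pdir k F = (if k = 0 then Dt F else if k = 1 then Dx F else Du F)"

text \<open>Smoothness (C-infinity) on I x J x U: all iterated partial derivatives exist
  and are continuous.\<close>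
definition smooth3 :: "real set \<Rightarrow> real set \<Rightarrow> real set \<Rightarrow> fn3 \<Rightarrow> bool" where
  "smooth3 I J U F \<longleftrightarrow> (\<forall>ks. let H = fold pdir ks F in
      continuous_on (I \<times> J \<times> U) (\<lambda>(t, x, u). H t x u) \<and>
      (\<forall>t\<in>I. \<forall>x\<in>J. \<forall>u\<in>U.
         (\<lambda>s. H s x u) differentiable (at t) \<and>
         (\<lambda>y. H t y u) differentiable (at x) \<and>
         (\<lambda>v. H t x v) differentiable (at u)))"

definition vtau :: "vfield \<Rightarrow> fn3" where "vtau Q = fst Q"
definition vxi :: "vfield \<Rightarrow> fn3" where "vxi Q = fst (snd Q)"
definition veta :: "vfield \<Rightarrow> fn3" where "veta Q = snd (snd Q)"

definition vapp :: "vfield \<Rightarrow> fn3 \<Rightarrow> fn3" where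
  "vapp Q F = (\<lambda>t x u. vtau Q t x u * Dt F t x u + vxi Q t x u * Dx F t x u
                        + veta Q t x u * Du F t x u)"

definition lie_bracket :: "vfield \<Rightarrow> vfield \<Rightarrow> vfield" where
  "lie_bracket P Q =
     ((\<lambda>t x u. vapp P (vtau Q) t x u - vapp Q (vtau P) t x u),
      (\<lambda>t x u. vapp P (vxi Q) t x u - vapp Q (vxi P) t x u),
      (\<lambda>t x u. vapp P (veta Q) t x u - vapp Q (veta P) t x u))"

definition vlin3 :: "real \<Rightarrow> vfield \<Rightarrow> real \<Rightarrow> vfield \<Rightarrow> real \<Rightarrow> vfield \<Rightarrow> vfield" where
  "vlin3 a P b Q c R =
     ((\<lambda>t x u. a * vtau P t x u + b * vtau Q t x u + c * vtau R t x u),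
      (\<lambda>t x u. a * vxi P t x u + b * vxi Q t x u + c * vxi R t x u),
      (\<lambda>t x u. a * veta P t x u + b * veta Q t x u + c * veta R t x u))"

definition vscale :: "real \<Rightarrow> vfield \<Rightarrow> vfield" where
  "vscale a P = ((\<lambda>t x u. a * vtau P t x u), (\<lambda>t x u. a * vxi P t x u),
                 (\<lambda>t x u. a * veta P t x u))"

definition vzero :: vfield where
  "vzero = ((\<lambda>t x u. 0), (\<lambda>t x u. 0), (\<lambda>t x u. 0))"

definition vf_eq_on :: "real set \<Rightarrow> real set \<Rightarrow> real set \<Rightarrow> vfield \<Rightarrow> vfield \<Rightarrow> bool" where
  "vf_eq_on I J U P Q \<longleftrightarrow> (\<forall>t\<in>I. \<forall>x\<in>J. \<forall>u\<in>U.
      vtau P t x u = vtau Q t x u \<and> vxi P t x u = vxi Q t x u \<and> veta P t x u = veta Q t x u)"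

definition lin_indep3 :: "real set \<Rightarrow> real set \<Rightarrow> real set \<Rightarrow> vfield \<Rightarrow> vfield \<Rightarrow> vfield \<Rightarrow> bool" where
  "lin_indep3 I J U P Q R \<longleftrightarrow>
     (\<forall>a b c. vf_eq_on I J U (vlin3 a P b Q c R) vzero \<longrightarrow> a = 0 \<and> b = 0 \<and> c = 0)"

text \<open>Coefficients of the second prolongation (standard formulas
  eta^t = D_t eta - u_t D_t tau - u_x D_t xi, eta^x = D_x eta - u_t D_x tau - u_x D_x xi,
  eta^{tx} = D_x eta^t - u_tt D_x tau - u_tx D_x xi, with D_t, D_x total derivatives),
  written out at the jet point (t,x,u,u_t,u_x,u_tt,u_tx,u_xx).\<close>
definition eta_t :: "vfield \<Rightarrow> real \<Rightarrow> real \<Rightarrow> real \<Rightarrow> real \<Rightarrow> real \<Rightarrow> real" where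
  "eta_t Q t x u ut ux =
     Dt (veta Q) t x u + ut * Du (veta Q) t x u
     - ut * (Dt (vtau Q) t x u + ut * Du (vtau Q) t x u)
     - ux * (Dt (vxi Q) t x u + ut * Du (vxi Q) t x u)"

definition eta_x :: "vfield \<Rightarrow> real \<Rightarrow> real \<Rightarrow> real \<Rightarrow> real \<Rightarrow> real \<Rightarrow> real" where
  "eta_x Q t x u ut ux =
     Dx (veta Q) t x u + ux * Du (veta Q) t x u
     - ut * (Dx (vtau Q) t x u + ux * Du (vtau Q) t x u)
     - ux * (Dx (vxi Q) t x u + ux * Du (vxi Q) t x u)"

definition eta_tx :: "vfield \<Rightarrow> real \<Rightarrow> real \<Rightarrow> real \<Rightarrow> real \<Rightarrow> real \<Rightarrow> real \<Rightarrow> real \<Rightarrow> real \<Rightarrow> real" where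
  "eta_tx Q t x u ut ux utt utx uxx =
     (let \<tau> = vtau Q; \<xi> = vxi Q; \<eta> = veta Q;
          dx_part = Dx (Dt \<eta>) t x u + ut * Dx (Du \<eta>) t x u
                    - ut * (Dx (Dt \<tau>) t x u + ut * Dx (Du \<tau>) t x u)
                    - ux * (Dx (Dt \<xi>) t x u + ut * Dx (Du \<xi>) t x u);
          du_part = Du (Dt \<eta>) t x u + ut * Du (Du \<eta>) t x u
                    - ut * (Du (Dt \<tau>) t x u + ut * Du (Du \<tau>) t x u)
                    - ux * (Du (Dt \<xi>) t x u + ut * Du (Du \<xi>) t x u);
          dut_part = Du \<eta> t x u - Dt \<tau> t x u - 2 * ut * Du \<tau> t x u - ux * Du \<xi> t x u;
          dux_part = - (Dt \<xi> t x u + ut * Du \<xi> t x u)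
      in dx_part + ux * du_part + utx * dut_part + uxx * dux_part
         - utt * (Dx \<tau> t x u + ux * Du \<tau> t x u)
         - utx * (Dx \<xi> t x u + ux * Du \<xi> t x u))"

text \<open>Q is a Lie point symmetry of u_tx = g(t,x) u_x + f(t,x,u) on I x J x U
  (infinitesimal invariance criterion: pr^(2) Q (Delta) = 0 whenever Delta = 0,
   Delta = u_tx - g u_x - f).\<close>
definition is_symmetry :: "real set \<Rightarrow> real set \<Rightarrow> real set \<Rightarrow> (real \<Rightarrow> real \<Rightarrow> real) \<Rightarrow> fn3 \<Rightarrow> vfield \<Rightarrow> bool" where
  "is_symmetry I J U g f Q \<longleftrightarrow>
     (\<forall>t\<in>I. \<forall>x\<in>J. \<forall>u\<in>U. \<forall>ut ux utt utx uxx.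
        utx = g t x * ux + f t x u \<longrightarrow>
        eta_tx Q t x u ut ux utt utx uxx
        - vapp Q (\<lambda>t x u. g t x) t x u * ux
        - g t x * eta_x Q t x u ut ux
        - vapp Q f t x u = 0)"

definition admissible_field :: "real set \<Rightarrow> real set \<Rightarrow> real set \<Rightarrow> vfield \<Rightarrow> bool" where
  "admissible_field I J U Q \<longleftrightarrow>
     smooth3 I J U (vtau Q) \<and> smooth3 I J U (vxi Q) \<and> smooth3 I J U (veta Q) \<and>
     (\<exists>\<tau>0 \<xi>0 h r. \<forall>t\<in>I. \<forall>x\<in>J. \<forall>u\<in>U.
        vtau Q t x u = \<tau>0 t \<and> vxi Q t x u = \<xi>0 x \<and> veta Q t x u = h t * u + r t x)"

definition so3_relations :: "real set \<Rightarrow> real set \<Rightarrow> real set \<Rightarrow> vfield \<Rightarrow> vfield \<Rightarrow> vfield \<Rightarrow> bool" where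
  "so3_relations I J U P Q R \<longleftrightarrow>
     vf_eq_on I J U (lie_bracket P Q) R \<and>
     vf_eq_on I J U (lie_bracket Q R) P \<and>
     vf_eq_on I J U (lie_bracket R P) Q"

definition sl2_relations :: "real set \<Rightarrow> real set \<Rightarrow> real set \<Rightarrow> vfield \<Rightarrow> vfield \<Rightarrow> vfield \<Rightarrow> bool" where
  "sl2_relations I J U P Q R \<longleftrightarrow>
     vf_eq_on I J U (lie_bracket P Q) P \<and>
     vf_eq_on I J U (lie_bracket Q R) R \<and>
     vf_eq_on I J U (lie_bracket P R) (vscale 2 Q)"

end

(*
  Collect the coefficients of the three fields F 1, F 2, F 3 into vectors tau(t), xi(x),
  h(t) in R^3, one component per field.  Brackets of such fields are given by
  one-dimensional formulas, so the commutation relations become the cross-product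
  identities cross3 tau tau' = B tau, cross3 xi xi' = B xi and cross3 tau h' = B h, with B
  the identity for so(3) and sl2_bracket_dual for sl(2,R).  For so(3) this forces tau = 0,
  since cross3 tau tau' is orthogonal to tau; likewise xi = 0 and h = 0, and then
  F 1 = [F 2, F 3] vanishes.
  For sl(2,R) the determining equations of the symmetry condition enter.  Where
  c = cross3 (tau t) (xi x) is nonzero, projecting them onto c and using the coadjoint
  action of c on sl(2,R) gives h(t) = g(t,x) tau(t), so g(t,.) is locally constant,
  contradicting g_x <> 0.  Hence tau(t) and xi(x) are always parallel, and together with
  the relations and g_x <> 0 this again forces tau = xi = h = 0.
*)

theory Submission
  imports Defs
begin

section \<open>Derivatives on open sets\<close>

lemma deriv_eq_on_open:
  assumes "open S" "x \<in> S" "\<And>y. y \<in> S \<Longrightarrow> f y = g y"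
  shows "deriv f x = deriv g x"
  using assms by (intro deriv_cong_ev) (auto simp: eventually_nhds)

lemma deriv_add_const: "deriv (\<lambda>y. c + f y) x = deriv f x"
proof -
  have "DERIV (\<lambda>y. c + f y) x :> D \<longleftrightarrow> DERIV f x :> D" for D
    using DERIV_add[OF DERIV_const[of "-c"], of "\<lambda>y. c + f y" D x]
      DERIV_add[OF DERIV_const[of c], of f D x] by auto
  then show ?thesis unfolding deriv_def by simp
qed

lemma DERIV_const_on_open:
  assumes "(f has_real_derivative D) (at x)" "open S" "x \<in> S" "\<And>y. y \<in> S \<Longrightarrow> f y = c"
  shows "D = 0"
proof -
  have "(f has_real_derivative 0) (at x)"
    using assms(2-) by (intro has_field_derivative_transform_within_open[of "\<lambda>y. c" 0 x S f]) auto
  then show ?thesis using assms(1) DERIV_unique by blast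
qed

lemma DERIV_deriv_transform_within_open:
  assumes "(f has_real_derivative D) (at x)" "open S" "x \<in> S" "\<And>y. y \<in> S \<Longrightarrow> f y = g y"
  shows "(g has_real_derivative deriv g x) (at x)"
proof -
  have "(g has_real_derivative D) (at x)"
    using assms by (rule has_field_derivative_transform_within_open)
  moreover from this have "deriv g x = D" by (rule DERIV_imp_deriv)
  ultimately show ?thesis by simp
qed

lemma deriv_affine [simp]: "deriv (\<lambda>v. a * v + b) u = (a::real)"
  by (rule DERIV_imp_deriv) (auto intro!: derivative_eq_intros)

lemma Dt_eq_on:
  "open I \<Longrightarrow> t \<in> I \<Longrightarrow> (\<And>s. s \<in> I \<Longrightarrow> F s x u = \<phi> s) \<Longrightarrow> Dt F t x u = deriv \<phi> t"
  unfolding Dt_def by (rule deriv_eq_on_open)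

lemma Dx_eq_on:
  "open J \<Longrightarrow> x \<in> J \<Longrightarrow> (\<And>y. y \<in> J \<Longrightarrow> F t y u = \<phi> y) \<Longrightarrow> Dx F t x u = deriv \<phi> x"
  unfolding Dx_def by (rule deriv_eq_on_open)

lemma Du_eq_on:
  "open U \<Longrightarrow> u \<in> U \<Longrightarrow> (\<And>v. v \<in> U \<Longrightarrow> F t x v = \<phi> v) \<Longrightarrow> Du F t x u = deriv \<phi> u"
  unfolding Du_def by (rule deriv_eq_on_open)

lemma smooth3_has_derivative:
  assumes "smooth3 I J U F" "t \<in> I" "x \<in> J" "u \<in> U"
  shows "((\<lambda>s. F s x u) has_real_derivative Dt F t x u) (at t)"
    and "((\<lambda>y. F t y u) has_real_derivative Dx F t x u) (at x)"
    and "((\<lambda>v. F t x v) has_real_derivative Du F t x u) (at u)"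
  using assms(2-) spec[OF assms(1)[unfolded smooth3_def], of "[]"]
  by (auto simp: Dt_def Dx_def Du_def DERIV_deriv_iff_real_differentiable)

lemma smooth3_pdir:
  assumes "smooth3 I J U F"
  shows "smooth3 I J U (pdir k F)"
proof -
  have "fold pdir ks (pdir k F) = fold pdir (k # ks) F" for ks by simp
  then show ?thesis using assms unfolding smooth3_def by (simp only:) blast
qed

lemma smooth3_Dt: "smooth3 I J U F \<Longrightarrow> smooth3 I J U (Dt F)"
  and smooth3_Dx: "smooth3 I J U F \<Longrightarrow> smooth3 I J U (Dx F)"
  and smooth3_Du: "smooth3 I J U F \<Longrightarrow> smooth3 I J U (Du F)"
  using smooth3_pdir[of I J U F 0] smooth3_pdir[of I J U F 1] smooth3_pdir[of I J U F 2]
  by (simp_all add: pdir_def)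

lemma affine_vanishing_on_open:
  fixes a b :: real
  assumes "open U" "U \<noteq> {}" "\<And>u. u \<in> U \<Longrightarrow> a * u + b = 0"
  shows "a = 0" and "b = 0"
proof -
  obtain u\<^sub>1 where u\<^sub>1: "u\<^sub>1 \<in> U" using assms(2) by blast
  moreover have "U \<noteq> {u\<^sub>1}" using assms(1) not_open_singleton by metis
  ultimately obtain u\<^sub>2 where u\<^sub>2: "u\<^sub>2 \<in> U" "u\<^sub>2 \<noteq> u\<^sub>1" by blast
  have "a * (u\<^sub>1 - u\<^sub>2) = (a * u\<^sub>1 + b) - (a * u\<^sub>2 + b)" by (simp add: right_diff_distrib)
  then have "a * (u\<^sub>1 - u\<^sub>2) = 0" using assms(3)[OF u\<^sub>1] assms(3)[OF u\<^sub>2(1)] by simp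
  then show "a = 0" using u\<^sub>2(2) by simp
  then show "b = 0" using assms(3)[OF u\<^sub>1] by simp
qed

lemma vec3_DERIV_const_on_open:
  fixes \<phi> :: "real \<Rightarrow> real^3"
  assumes "\<And>i. ((\<lambda>s. \<phi> s $ i) has_real_derivative \<psi> $ i) (at t)" "open S" "t \<in> S"
    and "\<And>s. s \<in> S \<Longrightarrow> \<phi> s = c"
  shows "\<psi> = 0"
  using DERIV_const_on_open[OF assms(1) assms(2,3)] assms(4) by (simp add: vec_eq_iff)

lemma cross3_has_real_derivative_component:
  fixes \<phi> :: "real \<Rightarrow> real^3"
  assumes "\<And>i. ((\<lambda>s. \<phi> s $ i) has_real_derivative \<psi> $ i) (at t)"
  shows "((\<lambda>s. cross3 (\<phi> s) w $ i) has_real_derivative cross3 \<psi> w $ i) (at t)"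
  using assms[of 1] assms[of 2] assms[of 3] exhaust_3[of i]
  by (auto simp: cross3_def intro!: derivative_eq_intros)

lemma vec3_isCont:
  fixes \<phi> :: "real \<Rightarrow> real^3"
  assumes "\<And>i. isCont (\<lambda>s. \<phi> s $ i) t"
  shows "isCont \<phi> t"
  using assms unfolding isCont_def by (intro vec_tendstoI)


section \<open>Coefficients and determining equations of admissible fields\<close>

text \<open>The arguments \<open>r\<^sub>t, r\<^sub>x, r\<^sub>t\<^sub>x\<close> stand for partial derivatives of \<open>r\<close>, but the definition does
  not tie them to \<open>r\<close>.\<close>

definition field_coeffs ::
  "real set \<Rightarrow> real set \<Rightarrow> real set \<Rightarrow> vfield \<Rightarrow> (real \<Rightarrow> real) \<Rightarrow> (real \<Rightarrow> real) \<Rightarrow>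
   (real \<Rightarrow> real) \<Rightarrow> (real \<Rightarrow> real) \<Rightarrow> (real \<Rightarrow> real) \<Rightarrow> (real \<Rightarrow> real) \<Rightarrow>
   (real \<Rightarrow> real \<Rightarrow> real) \<Rightarrow> (real \<Rightarrow> real \<Rightarrow> real) \<Rightarrow> (real \<Rightarrow> real \<Rightarrow> real) \<Rightarrow>
   (real \<Rightarrow> real \<Rightarrow> real) \<Rightarrow> bool" where
  "field_coeffs I J U Q \<tau> \<tau>' \<xi> \<xi>' h h' r r\<^sub>t r\<^sub>x r\<^sub>t\<^sub>x \<longleftrightarrow>
     (\<forall>t\<in>I. (\<tau> has_real_derivative \<tau>' t) (at t) \<and> (h has_real_derivative h' t) (at t)) \<and>
     (\<forall>x\<in>J. (\<xi> has_real_derivative \<xi>' x) (at x)) \<and>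
     (\<forall>t\<in>I. \<forall>x\<in>J. \<forall>u\<in>U.
        vtau Q t x u = \<tau> t \<and> Dt (vtau Q) t x u = \<tau>' t \<and> Dx (vtau Q) t x u = 0 \<and> Du (vtau Q) t x u = 0 \<and>
        vxi Q t x u = \<xi> x \<and> Dt (vxi Q) t x u = 0 \<and> Dx (vxi Q) t x u = \<xi>' x \<and> Du (vxi Q) t x u = 0 \<and>
        Dx (Dt (vxi Q)) t x u = 0 \<and> Du (Dt (vxi Q)) t x u = 0 \<and>
        veta Q t x u = h t * u + r t x \<and> Dt (veta Q) t x u = h' t * u + r\<^sub>t t x \<and>
        Dx (veta Q) t x u = r\<^sub>x t x \<and> Du (veta Q) t x u = h t \<and>
        Dx (Dt (veta Q)) t x u = r\<^sub>t\<^sub>x t x \<and> Du (Dt (veta Q)) t x u = h' t)"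

lemma field_coeffsI:
  assumes oI: "open I" and oJ: "open J" and oU: "open U"
    and val: "\<And>t x u. t \<in> I \<Longrightarrow> x \<in> J \<Longrightarrow> u \<in> U \<Longrightarrow>
      vtau Q t x u = \<tau> t \<and> vxi Q t x u = \<xi> x \<and> veta Q t x u = h t * u + r t x"
    and d\<tau>: "\<And>t. t \<in> I \<Longrightarrow> (\<tau> has_real_derivative deriv \<tau> t) (at t)"
    and d\<xi>: "\<And>x. x \<in> J \<Longrightarrow> (\<xi> has_real_derivative deriv \<xi> x) (at x)"
    and dh: "\<And>t. t \<in> I \<Longrightarrow> (h has_real_derivative deriv h t) (at t)"
    and dr: "\<And>t x. t \<in> I \<Longrightarrow> x \<in> J \<Longrightarrow> ((\<lambda>s. r s x) has_real_derivative deriv (\<lambda>s. r s x) t) (at t)"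
  shows "field_coeffs I J U Q \<tau> (deriv \<tau>) \<xi> (deriv \<xi>) h (deriv h) r (\<lambda>t x. deriv (\<lambda>s. r s x) t)
    (\<lambda>t x. deriv (\<lambda>y. r t y) x) (\<lambda>t x. deriv (\<lambda>y. deriv (\<lambda>s. r s y) t) x)"
  unfolding field_coeffs_def
proof (intro conjI ballI)
  fix t x u assume box: "t \<in> I" "x \<in> J" "u \<in> U"
  have Dt_xi: "Dt (vxi Q) t y v = 0" if "y \<in> J" "v \<in> U" for y v
    using val box that Dt_eq_on[OF oI, of t "vxi Q" y v "\<lambda>s. \<xi> y"] by auto
  have Dt_eta: "Dt (veta Q) t y v = deriv h t * v + deriv (\<lambda>s. r s y) t" if "y \<in> J" "v \<in> U" for y v
  proof -
    have "Dt (veta Q) t y v = deriv (\<lambda>s. h s * v + r s y) t"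
      using val box that by (intro Dt_eq_on[OF oI]) auto
    also have "\<dots> = deriv h t * v + deriv (\<lambda>s. r s y) t"
      using dh dr box that by (intro DERIV_imp_deriv) (auto intro!: derivative_eq_intros)
    finally show ?thesis .
  qed
  show "vtau Q t x u = \<tau> t" "vxi Q t x u = \<xi> x" "veta Q t x u = h t * u + r t x"
    using val box by auto
  show "Dt (vtau Q) t x u = deriv \<tau> t"
    using val box by (intro Dt_eq_on[OF oI]) auto
  show "Dx (vtau Q) t x u = 0"
    using val box Dx_eq_on[OF oJ, of x "vtau Q" t u "\<lambda>y. \<tau> t"] by auto
  show "Du (vtau Q) t x u = 0"
    using val box Du_eq_on[OF oU, of u "vtau Q" t x "\<lambda>v. \<tau> t"] by auto
  show "Dt (vxi Q) t x u = 0"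
    using Dt_xi box(2,3) .
  show "Dx (vxi Q) t x u = deriv \<xi> x"
    using val box by (intro Dx_eq_on[OF oJ]) auto
  show "Du (vxi Q) t x u = 0"
    using val box Du_eq_on[OF oU, of u "vxi Q" t x "\<lambda>v. \<xi> x"] by auto
  show "Dx (Dt (vxi Q)) t x u = 0"
    using Dt_xi box Dx_eq_on[OF oJ, of x "Dt (vxi Q)" t u "\<lambda>y. 0"] by auto
  show "Du (Dt (vxi Q)) t x u = 0"
    using Dt_xi box Du_eq_on[OF oU, of u "Dt (vxi Q)" t x "\<lambda>v. 0"] by auto
  show "Dt (veta Q) t x u = deriv h t * u + deriv (\<lambda>s. r s x) t"
    using Dt_eta box(2,3) .
  show "Dx (veta Q) t x u = deriv (\<lambda>y. r t y) x"
    using val box Dx_eq_on[OF oJ, of x "veta Q" t u "\<lambda>y. h t * u + r t y"] by (auto simp: deriv_add_const)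
  show "Du (veta Q) t x u = h t"
    using val box Du_eq_on[OF oU, of u "veta Q" t x "\<lambda>v. h t * v + r t x"] by simp
  show "Dx (Dt (veta Q)) t x u = deriv (\<lambda>y. deriv (\<lambda>s. r s y) t) x"
    using Dt_eta box Dx_eq_on[OF oJ, of x "Dt (veta Q)" t u "\<lambda>y. deriv h t * u + deriv (\<lambda>s. r s y) t"]
    by (auto simp: deriv_add_const)
  show "Du (Dt (veta Q)) t x u = deriv h t"
    using Dt_eta box Du_eq_on[OF oU, of u "Dt (veta Q)" t x "\<lambda>v. deriv h t * v + deriv (\<lambda>s. r s x) t"]
    by auto
qed (use d\<tau> d\<xi> dh in auto)

lemma admissible_field_coeffs:
  assumes oI: "open I" and oJ: "open J" and oU: "open U" and "I \<noteq> {}" "J \<noteq> {}" "U \<noteq> {}"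
    and "admissible_field I J U Q"
  shows "\<exists>\<tau> \<tau>' \<xi> \<xi>' h h' r r\<^sub>t r\<^sub>x r\<^sub>t\<^sub>x. field_coeffs I J U Q \<tau> \<tau>' \<xi> \<xi>' h h' r r\<^sub>t r\<^sub>x r\<^sub>t\<^sub>x"
proof -
  obtain \<tau> \<xi> h r where
      sm: "smooth3 I J U (vtau Q)" "smooth3 I J U (vxi Q)" "smooth3 I J U (veta Q)"
    and val: "\<And>t x u. t \<in> I \<Longrightarrow> x \<in> J \<Longrightarrow> u \<in> U \<Longrightarrow>
      vtau Q t x u = \<tau> t \<and> vxi Q t x u = \<xi> x \<and> veta Q t x u = h t * u + r t x"
    using assms(7) unfolding admissible_field_def by metis
  obtain t\<^sub>0 x\<^sub>0 u\<^sub>0 where t\<^sub>0: "t\<^sub>0 \<in> I" and x\<^sub>0: "x\<^sub>0 \<in> J" and u\<^sub>0: "u\<^sub>0 \<in> U"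
    using assms(4-6) by blast
  have d\<tau>: "(\<tau> has_real_derivative deriv \<tau> t) (at t)" if "t \<in> I" for t
    by (rule DERIV_deriv_transform_within_open[OF smooth3_has_derivative(1)[OF sm(1) that x\<^sub>0 u\<^sub>0] oI that])
      (use val x\<^sub>0 u\<^sub>0 in auto)
  have d\<xi>: "(\<xi> has_real_derivative deriv \<xi> x) (at x)" if "x \<in> J" for x
    by (rule DERIV_deriv_transform_within_open[OF smooth3_has_derivative(2)[OF sm(2) t\<^sub>0 that u\<^sub>0] oJ that])
      (use val t\<^sub>0 u\<^sub>0 in auto)
  have "Du (veta Q) t x\<^sub>0 u\<^sub>0 = h t" if "t \<in> I" for t
    using Du_eq_on[OF oU u\<^sub>0, of "veta Q" t x\<^sub>0 "\<lambda>v. h t * v + r t x\<^sub>0"] val that x\<^sub>0 by simp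
  then have dh: "(h has_real_derivative deriv h t) (at t)" if "t \<in> I" for t
    by (intro DERIV_deriv_transform_within_open[OF smooth3_has_derivative(1)[OF smooth3_Du[OF sm(3)] that x\<^sub>0 u\<^sub>0] oI that])
  have dr: "((\<lambda>s. r s x) has_real_derivative deriv (\<lambda>s. r s x) t) (at t)" if "t \<in> I" "x \<in> J" for t x
    by (rule DERIV_deriv_transform_within_open[where f = "\<lambda>s. veta Q s x u\<^sub>0 - h s * u\<^sub>0", OF _ oI that(1)])
      (use smooth3_has_derivative(1)[OF sm(3) that u\<^sub>0] dh[OF that(1)] val that u\<^sub>0
        in \<open>auto intro!: derivative_eq_intros\<close>)
  show ?thesis using field_coeffsI[OF oI oJ oU val d\<tau> d\<xi> dh dr] by blast
qed

lemma symmetry_at_jet: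
  assumes F: "field_coeffs I J U Q \<tau> \<tau>' \<xi> \<xi>' h h' r r\<^sub>t r\<^sub>x r\<^sub>t\<^sub>x" and S: "is_symmetry I J U g f Q"
    and box: "t \<in> I" "x \<in> J" "u \<in> U"
  shows "r\<^sub>t\<^sub>x t x + f t x u * (h t - \<tau>' t - \<xi>' x) - g t x * r\<^sub>x t x
      - \<tau> t * Dt f t x u - \<xi> x * Dx f t x u - (h t * u + r t x) * Du f t x u
      + u\<^sub>x * (h' t - \<tau>' t * g t x - \<tau> t * Dt (\<lambda>t x u. g t x) t x u - \<xi> x * Dx (\<lambda>t x u. g t x) t x u) = 0"
proof -
  have "Du (\<lambda>t x u. g t x) t x u = 0" by (simp add: Du_def)
  moreover have "eta_tx Q t x u 0 u\<^sub>x 0 (g t x * u\<^sub>x + f t x u) 0 - vapp Q (\<lambda>t x u. g t x) t x u * u\<^sub>x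
      - g t x * eta_x Q t x u 0 u\<^sub>x - vapp Q f t x u = 0"
    using S box unfolding is_symmetry_def by blast
  ultimately show ?thesis
    using F box unfolding field_coeffs_def eta_tx_def eta_x_def vapp_def Let_def
    by (simp add: algebra_simps)
qed

lemma symmetry_ux_coefficient:
  assumes "field_coeffs I J U Q \<tau> \<tau>' \<xi> \<xi>' h h' r r\<^sub>t r\<^sub>x r\<^sub>t\<^sub>x" "is_symmetry I J U g f Q"
    and "t \<in> I" "x \<in> J" "u \<in> U"
  shows "h' t = \<tau>' t * g t x + \<tau> t * Dt (\<lambda>t x u. g t x) t x u + \<xi> x * Dx (\<lambda>t x u. g t x) t x u"
  using symmetry_at_jet[OF assms, of 0] symmetry_at_jet[OF assms, of 1] by simp

lemma symmetry_free_term: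
  assumes "field_coeffs I J U Q \<tau> \<tau>' \<xi> \<xi>' h h' r r\<^sub>t r\<^sub>x r\<^sub>t\<^sub>x" "is_symmetry I J U g f Q"
    and "t \<in> I" "x \<in> J" "u \<in> U"
  shows "r\<^sub>t\<^sub>x t x + f t x u * (h t - \<tau>' t - \<xi>' x) - g t x * r\<^sub>x t x
      = \<tau> t * Dt f t x u + \<xi> x * Dx f t x u + (h t * u + r t x) * Du f t x u"
  using symmetry_at_jet[OF assms, of 0] by simp

lemma symmetry_ux_coefficient_Dx:
  assumes F: "field_coeffs I J U Q \<tau> \<tau>' \<xi> \<xi>' h h' r r\<^sub>t r\<^sub>x r\<^sub>t\<^sub>x" and S: "is_symmetry I J U g f Q"
    and sg: "smooth3 I J U (\<lambda>t x u. g t x)" and oJ: "open J"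
    and box: "t \<in> I" "x \<in> J" "u \<in> U"
  shows "\<tau> t * Dx (Dt (\<lambda>t x u. g t x)) t x u + \<xi> x * Dx (Dx (\<lambda>t x u. g t x)) t x u
     + (\<tau>' t + \<xi>' x) * Dx (\<lambda>t x u. g t x) t x u = 0"
proof -
  have "((\<lambda>y. \<tau>' t * g t y + \<tau> t * Dt (\<lambda>t x u. g t x) t y u + \<xi> y * Dx (\<lambda>t x u. g t x) t y u)
     has_real_derivative \<tau>' t * Dx (\<lambda>t x u. g t x) t x u + \<tau> t * Dx (Dt (\<lambda>t x u. g t x)) t x u
     + (\<xi>' x * Dx (\<lambda>t x u. g t x) t x u + \<xi> x * Dx (Dx (\<lambda>t x u. g t x)) t x u)) (at x)"
    using smooth3_has_derivative(2)[OF sg box] smooth3_has_derivative(2)[OF smooth3_Dt[OF sg] box]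
      smooth3_has_derivative(2)[OF smooth3_Dx[OF sg] box] F box(2)
    unfolding field_coeffs_def by (auto intro!: derivative_eq_intros)
  moreover have "\<And>y. y \<in> J \<Longrightarrow>
      \<tau>' t * g t y + \<tau> t * Dt (\<lambda>t x u. g t x) t y u + \<xi> y * Dx (\<lambda>t x u. g t x) t y u = h' t"
    using symmetry_ux_coefficient[OF F S box(1) _ box(3)] by simp
  ultimately have "\<tau>' t * Dx (\<lambda>t x u. g t x) t x u + \<tau> t * Dx (Dt (\<lambda>t x u. g t x)) t x u
     + (\<xi>' x * Dx (\<lambda>t x u. g t x) t x u + \<xi> x * Dx (Dx (\<lambda>t x u. g t x)) t x u) = 0"
    by (rule DERIV_const_on_open[OF _ oJ box(2)])
  then show ?thesis by (simp add: algebra_simps)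
qed

lemma symmetry_free_term_Du:
  assumes F: "field_coeffs I J U Q \<tau> \<tau>' \<xi> \<xi>' h h' r r\<^sub>t r\<^sub>x r\<^sub>t\<^sub>x" and S: "is_symmetry I J U g f Q"
    and sf: "smooth3 I J U f" and oU: "open U"
    and box: "t \<in> I" "x \<in> J" "u \<in> U"
  shows "\<tau> t * Du (Dt f) t x u + \<xi> x * Du (Dx f) t x u + (h t * u + r t x) * Du (Du f) t x u
     + (\<tau>' t + \<xi>' x) * Du f t x u = 0"
proof -
  have "((\<lambda>v. f t x v * (h t - \<tau>' t - \<xi>' x) - \<tau> t * Dt f t x v - \<xi> x * Dx f t x v
         - (h t * v + r t x) * Du f t x v) has_real_derivative
        Du f t x u * (h t - \<tau>' t - \<xi>' x) - \<tau> t * Du (Dt f) t x u - \<xi> x * Du (Dx f) t x u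
        - (h t * Du f t x u + (h t * u + r t x) * Du (Du f) t x u)) (at u)"
    using smooth3_has_derivative(3)[OF sf box] smooth3_has_derivative(3)[OF smooth3_Dt[OF sf] box]
      smooth3_has_derivative(3)[OF smooth3_Dx[OF sf] box] smooth3_has_derivative(3)[OF smooth3_Du[OF sf] box]
    by (auto intro!: derivative_eq_intros simp: algebra_simps)
  moreover have "\<And>v. v \<in> U \<Longrightarrow> f t x v * (h t - \<tau>' t - \<xi>' x) - \<tau> t * Dt f t x v - \<xi> x * Dx f t x v
         - (h t * v + r t x) * Du f t x v = g t x * r\<^sub>x t x - r\<^sub>t\<^sub>x t x"
    using symmetry_free_term[OF F S box(1,2)] by (simp add: algebra_simps)
  ultimately have "Du f t x u * (h t - \<tau>' t - \<xi>' x) - \<tau> t * Du (Dt f) t x u - \<xi> x * Du (Dx f) t x u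
        - (h t * Du f t x u + (h t * u + r t x) * Du (Du f) t x u) = 0"
    by (rule DERIV_const_on_open[OF _ oU box(3)])
  then show ?thesis by (simp add: algebra_simps)
qed

lemma lie_bracket_coeffs:
  assumes P: "field_coeffs I J U P \<tau>\<^sub>P \<tau>\<^sub>P' \<xi>\<^sub>P \<xi>\<^sub>P' h\<^sub>P h\<^sub>P' r\<^sub>P r\<^sub>P\<^sub>t r\<^sub>P\<^sub>x r\<^sub>P\<^sub>t\<^sub>x"
    and Q: "field_coeffs I J U Q \<tau>\<^sub>Q \<tau>\<^sub>Q' \<xi>\<^sub>Q \<xi>\<^sub>Q' h\<^sub>Q h\<^sub>Q' r\<^sub>Q r\<^sub>Q\<^sub>t r\<^sub>Q\<^sub>x r\<^sub>Q\<^sub>t\<^sub>x"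
    and box: "t \<in> I" "x \<in> J" "u \<in> U"
  shows "vtau (lie_bracket P Q) t x u = \<tau>\<^sub>P t * \<tau>\<^sub>Q' t - \<tau>\<^sub>Q t * \<tau>\<^sub>P' t"
    and "vxi (lie_bracket P Q) t x u = \<xi>\<^sub>P x * \<xi>\<^sub>Q' x - \<xi>\<^sub>Q x * \<xi>\<^sub>P' x"
    and "veta (lie_bracket P Q) t x u = (\<tau>\<^sub>P t * h\<^sub>Q' t - \<tau>\<^sub>Q t * h\<^sub>P' t) * u
           + (\<tau>\<^sub>P t * r\<^sub>Q\<^sub>t t x + \<xi>\<^sub>P x * r\<^sub>Q\<^sub>x t x + r\<^sub>P t x * h\<^sub>Q t
              - \<tau>\<^sub>Q t * r\<^sub>P\<^sub>t t x - \<xi>\<^sub>Q x * r\<^sub>P\<^sub>x t x - r\<^sub>Q t x * h\<^sub>P t)"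
  using P Q box unfolding field_coeffs_def lie_bracket_def vapp_def
  by (simp_all add: vtau_def vxi_def veta_def algebra_simps)


section \<open>Cross-product algebra of so(3) and sl(2,R)\<close>

lemma cross3_eqI:
  assumes "a$2 * b$3 - a$3 * b$2 = c$1" "a$3 * b$1 - a$1 * b$3 = c$2" "a$1 * b$2 - a$2 * b$1 = c$3"
  shows "cross3 a b = c"
  using assms by (simp add: vec_eq_iff forall_3 cross_components mult.commute)

text \<open>Vectors \<open>a\<close> in \<open>\<real>\<^sup>3\<close> stand for linear functionals on sl(2,R) via \<open>a$i = a(e\<^sub>i)\<close>, in the basis with
  \<open>[e\<^sub>1,e\<^sub>2] = e\<^sub>1\<close>, \<open>[e\<^sub>2,e\<^sub>3] = e\<^sub>3\<close>, \<open>[e\<^sub>1,e\<^sub>3] = 2 e\<^sub>2\<close>.  The identities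
  \<open>h[e\<^sub>i,e\<^sub>j] = a(e\<^sub>i) b(e\<^sub>j) - a(e\<^sub>j) b(e\<^sub>i)\<close> then say exactly \<open>cross3 a b = sl2_bracket_dual h\<close>;
  for so(3) the analogous map is the identity.\<close>

definition sl2_bracket_dual :: "real^3 \<Rightarrow> real^3" where
  "sl2_bracket_dual a = vector [a$3, -2 * a$2, a$1]"

lemma sl2_bracket_dual_eq_0_iff [simp]: "sl2_bracket_dual a = 0 \<longleftrightarrow> a = 0"
  by (auto simp: sl2_bracket_dual_def vec_eq_iff forall_3)

lemma sl2_bracket_dual_diff: "sl2_bracket_dual (a - b) = sl2_bracket_dual a - sl2_bracket_dual b"
  by (simp add: sl2_bracket_dual_def vec_eq_iff forall_3)

lemma sl2_bracket_dual_add: "sl2_bracket_dual (a + b) = sl2_bracket_dual a + sl2_bracket_dual b"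
  by (simp add: sl2_bracket_dual_def vec_eq_iff forall_3)

lemma sl2_bracket_dual_scaleR: "sl2_bracket_dual (c *\<^sub>R a) = c *\<^sub>R sl2_bracket_dual a"
  by (simp add: sl2_bracket_dual_def vec_eq_iff forall_3)

lemma cross_sl2_bracket_dual:
  "cross3 (sl2_bracket_dual a) (sl2_bracket_dual b) = vector [2 * cross3 a b $ 3, - cross3 a b $ 2, 2 * cross3 a b $ 1]"
  by (simp add: vec_eq_iff forall_3 cross_components sl2_bracket_dual_def)

lemma cross_eq_0_common_factor:
  fixes a b w :: "real^3"
  assumes "cross3 a w = 0" "cross3 b w = 0" "w \<noteq> 0"
  shows "cross3 a b = 0"
proof -
  have "(w \<bullet> w) *\<^sub>R a = (w \<bullet> a) *\<^sub>R w" "(w \<bullet> w) *\<^sub>R b = (w \<bullet> b) *\<^sub>R w"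
    using Lagrange[of w a w] Lagrange[of w b w] assms(1,2) by (simp_all add: cross_skew[of _ w])
  then have "((w \<bullet> w) * (w \<bullet> w)) *\<^sub>R cross3 a b = cross3 ((w \<bullet> a) *\<^sub>R w) ((w \<bullet> b) *\<^sub>R w)"
    by (metis cross_mult_left cross_mult_right scaleR_scaleR)
  then show ?thesis using assms(3) by (simp add: cross_mult_left cross_mult_right)
qed

text \<open>In terms of functionals: \<open>h \<circ> ad c = - b(c) a\<close> whenever \<open>a(c) = 0\<close>.\<close>

lemma sl2_coadjoint:
  assumes "cross3 a b = sl2_bracket_dual h" "c \<bullet> a = 0"
  shows "cross3 (sl2_bracket_dual h) c = - (c \<bullet> b) *\<^sub>R a"
proof -
  have "cross3 (sl2_bracket_dual h) c = - cross3 c (cross3 a b)"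
    using assms(1) cross_skew by metis
  then show ?thesis using Lagrange[of c a b] assms(2) by simp
qed

text \<open>The hypotheses say that the form \<open>a \<bullet> sl2_bracket_dual b\<close>, of signature (1,2), vanishes
  on the span of \<open>a\<close> and \<open>b\<close>; a totally isotropic plane cannot exist.\<close>

lemma sl2_no_isotropic_plane:
  assumes "cross3 (sl2_bracket_dual a) (cross3 a b) = 0" "cross3 (sl2_bracket_dual b) (cross3 a b) = 0"
  shows "cross3 a b = 0"
proof (rule ccontr)
  assume "cross3 a b \<noteq> 0"
  then have "cross3 (sl2_bracket_dual a) (sl2_bracket_dual b) = 0"
    using assms cross_eq_0_common_factor by blast
  then show False
    using \<open>cross3 a b \<noteq> 0\<close> by (simp add: cross_sl2_bracket_dual vec_eq_iff forall_3)
qed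

lemma cross_ne_0_independent:
  assumes "cross3 a b \<noteq> 0" "\<alpha> *\<^sub>R a + \<beta> *\<^sub>R b = 0"
  shows "\<alpha> = 0" "\<beta> = 0"
proof -
  have "\<alpha> *\<^sub>R cross3 a b = cross3 (\<alpha> *\<^sub>R a + \<beta> *\<^sub>R b) b"
    by (simp add: cross_add_left cross_mult_left)
  then show "\<alpha> = 0" using assms by simp
  have "\<beta> *\<^sub>R cross3 a b = cross3 a (\<alpha> *\<^sub>R a + \<beta> *\<^sub>R b)"
    by (simp add: cross_add_right cross_mult_right)
  then show "\<beta> = 0" using assms by simp
qed

lemma cross_orthogonal_decomp:
  "(cross3 a b \<bullet> cross3 a b) *\<^sub>R d - (cross3 a b \<bullet> d) *\<^sub>R cross3 a b
     = ((d \<bullet> a) * (b \<bullet> b) - (d \<bullet> b) * (a \<bullet> b)) *\<^sub>R a + ((d \<bullet> b) * (a \<bullet> a) - (d \<bullet> a) * (a \<bullet> b)) *\<^sub>R b"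
  unfolding vec_eq_iff forall_3 by (simp add: cross_components inner_vec_def sum_3) algebra

lemma orthogonal_cross_in_span:
  assumes "cross3 a b \<noteq> 0" "cross3 a b \<bullet> d = 0"
  obtains \<alpha> \<beta> where "d = \<alpha> *\<^sub>R a + \<beta> *\<^sub>R b"
proof -
  define N where "N = cross3 a b \<bullet> cross3 a b"
  define \<alpha> where "\<alpha> = (d \<bullet> a) * (b \<bullet> b) - (d \<bullet> b) * (a \<bullet> b)"
  define \<beta> where "\<beta> = (d \<bullet> b) * (a \<bullet> a) - (d \<bullet> a) * (a \<bullet> b)"
  have "N \<noteq> 0" using assms(1) by (simp add: N_def)
  have decomp: "N *\<^sub>R d = \<alpha> *\<^sub>R a + \<beta> *\<^sub>R b"
    using cross_orthogonal_decomp[of a b d] assms(2) by (simp add: N_def \<alpha>_def \<beta>_def)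
  have "d = inverse N *\<^sub>R (N *\<^sub>R d)" using \<open>N \<noteq> 0\<close> by simp
  also have "\<dots> = (\<alpha> / N) *\<^sub>R a + (\<beta> / N) *\<^sub>R b"
    unfolding decomp by (simp add: scaleR_add_right divide_inverse_commute)
  finally show thesis by (rule that)
qed

lemma sl2_coadjoint_kernel:
  assumes c: "cross3 a b \<noteq> 0" and l: "l \<noteq> 0"
    and a: "cross3 (sl2_bracket_dual a) (cross3 a b) = - l *\<^sub>R a"
    and b: "cross3 (sl2_bracket_dual b) (cross3 a b) = l *\<^sub>R b"
    and d: "cross3 (sl2_bracket_dual d) (cross3 a b) = 0" "cross3 a b \<bullet> d = 0"
  shows "d = 0"
proof -
  obtain \<alpha> \<beta> where d_span: "d = \<alpha> *\<^sub>R a + \<beta> *\<^sub>R b"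
    using orthogonal_cross_in_span[OF c d(2)] .
  have "(- l * \<alpha>) *\<^sub>R a + (l * \<beta>) *\<^sub>R b = 0"
    using a b d(1) unfolding d_span
    by (simp add: sl2_bracket_dual_add sl2_bracket_dual_scaleR cross_add_left cross_mult_left mult.commute)
  then have "l * \<alpha> = 0" "l * \<beta> = 0"
    using cross_ne_0_independent[OF c] by (metis add.inverse_neutral minus_mult_left neg_equal_0_iff_equal)+
  then show ?thesis using d_span l by simp
qed

lemma sl2_pointwise_h_eq_g_tau:
  fixes T S X Y H K :: "real^3" and g :: real
  assumes TS: "cross3 T S = sl2_bracket_dual T" and XY: "cross3 X Y = sl2_bracket_dual X"
    and TK: "cross3 T K = sl2_bracket_dual H" and c: "cross3 T X \<noteq> 0"
    and cH: "cross3 T X \<bullet> H = 0" and cSY: "cross3 T X \<bullet> (S + Y) = 0"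
    and cK: "cross3 T X \<bullet> K = (cross3 T X \<bullet> S) * g"
  shows "H = g *\<^sub>R T"
proof -
  define c where "c = cross3 T X"
  define l where "l = c \<bullet> S"
  have cT: "c \<bullet> T = 0" and cX: "c \<bullet> X = 0" by (simp_all add: c_def dot_cross_self)
  have WT: "cross3 (sl2_bracket_dual T) c = - l *\<^sub>R T"
    using sl2_coadjoint[OF TS cT] by (simp add: l_def)
  have "c \<bullet> Y = - l" using cSY by (simp add: c_def l_def inner_add_right)
  then have WX: "cross3 (sl2_bracket_dual X) c = l *\<^sub>R X"
    using sl2_coadjoint[OF XY cX] by simp
  have WH: "cross3 (sl2_bracket_dual H) c = - (l * g) *\<^sub>R T"
    using sl2_coadjoint[OF TK cT] cK by (simp add: c_def l_def)
  have "l \<noteq> 0"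
  proof
    assume "l = 0"
    then have "c = 0" using sl2_no_isotropic_plane[of T X] WT WX by (simp add: c_def)
    then show False using c by (simp add: c_def)
  qed
  moreover have "cross3 (sl2_bracket_dual (H - g *\<^sub>R T)) c = 0"
    using WT WH by (simp add: sl2_bracket_dual_diff sl2_bracket_dual_scaleR Cross3.left_diff_distrib cross_mult_left)
  moreover have "c \<bullet> (H - g *\<^sub>R T) = 0" using cH cT by (simp add: c_def inner_diff_right)
  ultimately have "H - g *\<^sub>R T = 0"
    using sl2_coadjoint_kernel[OF c _ WT[unfolded c_def] WX[unfolded c_def], of "H - g *\<^sub>R T"]
    by (simp add: c_def)
  then show ?thesis by simp
qed


section \<open>Triples of admissible fields\<close>

lemma vf_eq_on_vscale_one: "vf_eq_on I J U P (vscale 1 Q) \<longleftrightarrow> vf_eq_on I J U P Q"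
  by (simp add: vf_eq_on_def vscale_def vtau_def vxi_def veta_def)

locale coefficient_triple =
  fixes I J U :: "real set" and F :: "3 \<Rightarrow> vfield"
    and \<tau> \<tau>' \<xi> \<xi>' h h' :: "real \<Rightarrow> real^3" and r r\<^sub>t r\<^sub>x r\<^sub>t\<^sub>x :: "real \<Rightarrow> real \<Rightarrow> real^3"
  assumes open_I: "open I" and open_J: "open J" and open_U: "open U"
    and nonempty: "I \<noteq> {}" "J \<noteq> {}" "U \<noteq> {}"
    and coeffs: "\<And>i. field_coeffs I J U (F i) (\<lambda>t. \<tau> t $ i) (\<lambda>t. \<tau>' t $ i) (\<lambda>x. \<xi> x $ i) (\<lambda>x. \<xi>' x $ i)
      (\<lambda>t. h t $ i) (\<lambda>t. h' t $ i) (\<lambda>t x. r t x $ i) (\<lambda>t x. r\<^sub>t t x $ i) (\<lambda>t x. r\<^sub>x t x $ i) (\<lambda>t x. r\<^sub>t\<^sub>x t x $ i)"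
begin

lemma has_real_derivative_coeffs:
  shows "t \<in> I \<Longrightarrow> ((\<lambda>s. \<tau> s $ i) has_real_derivative \<tau>' t $ i) (at t)"
    and "t \<in> I \<Longrightarrow> ((\<lambda>s. h s $ i) has_real_derivative h' t $ i) (at t)"
    and "x \<in> J \<Longrightarrow> ((\<lambda>y. \<xi> y $ i) has_real_derivative \<xi>' x $ i) (at x)"
  using coeffs[of i] unfolding field_coeffs_def by blast+

lemma bracket_relation:
  assumes "vf_eq_on I J U (lie_bracket (F i) (F j)) (vscale c (F k))"
  shows "t \<in> I \<Longrightarrow> \<tau> t $ i * \<tau>' t $ j - \<tau> t $ j * \<tau>' t $ i = c * \<tau> t $ k"
    and "x \<in> J \<Longrightarrow> \<xi> x $ i * \<xi>' x $ j - \<xi> x $ j * \<xi>' x $ i = c * \<xi> x $ k"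
    and "t \<in> I \<Longrightarrow> \<tau> t $ i * h' t $ j - \<tau> t $ j * h' t $ i = c * h t $ k"
proof -
  have components: "\<tau> t $ i * \<tau>' t $ j - \<tau> t $ j * \<tau>' t $ i = c * \<tau> t $ k \<and>
      \<xi> x $ i * \<xi>' x $ j - \<xi> x $ j * \<xi>' x $ i = c * \<xi> x $ k \<and>
      (\<tau> t $ i * h' t $ j - \<tau> t $ j * h' t $ i - c * h t $ k) * u
        + (\<tau> t $ i * r\<^sub>t t x $ j + \<xi> x $ i * r\<^sub>x t x $ j + r t x $ i * h t $ j
           - \<tau> t $ j * r\<^sub>t t x $ i - \<xi> x $ j * r\<^sub>x t x $ i - r t x $ j * h t $ i - c * r t x $ k) = 0"
    if box: "t \<in> I" "x \<in> J" "u \<in> U" for t x u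
  proof -
    have "vtau (lie_bracket (F i) (F j)) t x u = c * vtau (F k) t x u"
      "vxi (lie_bracket (F i) (F j)) t x u = c * vxi (F k) t x u"
      "veta (lie_bracket (F i) (F j)) t x u = c * veta (F k) t x u"
      using assms box by (simp_all add: vf_eq_on_def vscale_def vtau_def vxi_def veta_def)
    then show ?thesis
      using lie_bracket_coeffs[OF coeffs[of i] coeffs[of j] box] coeffs[of k] box
      unfolding field_coeffs_def by (simp add: algebra_simps)
  qed
  obtain t\<^sub>0 x\<^sub>0 u\<^sub>0 where "t\<^sub>0 \<in> I" "x\<^sub>0 \<in> J" "u\<^sub>0 \<in> U" using nonempty by blast
  then show "t \<in> I \<Longrightarrow> \<tau> t $ i * \<tau>' t $ j - \<tau> t $ j * \<tau>' t $ i = c * \<tau> t $ k"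
    and "x \<in> J \<Longrightarrow> \<xi> x $ i * \<xi>' x $ j - \<xi> x $ j * \<xi>' x $ i = c * \<xi> x $ k"
    using components by blast+
  show "t \<in> I \<Longrightarrow> \<tau> t $ i * h' t $ j - \<tau> t $ j * h' t $ i = c * h t $ k"
    using affine_vanishing_on_open(1)[OF open_U nonempty(3)] components \<open>x\<^sub>0 \<in> J\<close> by fastforce
qed

lemma vertical_bracket_vanishes:
  assumes "\<And>t. t \<in> I \<Longrightarrow> \<tau> t = 0 \<and> h t = 0" and "\<And>x. x \<in> J \<Longrightarrow> \<xi> x = 0"
  shows "vf_eq_on I J U (lie_bracket (F i) (F j)) vzero"
  unfolding vf_eq_on_def
  using lie_bracket_coeffs[OF coeffs[of i] coeffs[of j]] assms
  by (simp add: vzero_def vtau_def vxi_def veta_def)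

lemma so3_first_field_vanishes:
  assumes "so3_relations I J U (F 1) (F 2) (F 3)"
  shows "vf_eq_on I J U (F 1) vzero"
proof -
  have rel: "vf_eq_on I J U (lie_bracket (F 1) (F 2)) (vscale 1 (F 3))"
    "vf_eq_on I J U (lie_bracket (F 2) (F 3)) (vscale 1 (F 1))"
    "vf_eq_on I J U (lie_bracket (F 3) (F 1)) (vscale 1 (F 2))"
    using assms by (simp_all add: so3_relations_def vf_eq_on_vscale_one)
  have \<tau>: "cross3 (\<tau> t) (\<tau>' t) = \<tau> t" and h: "cross3 (\<tau> t) (h' t) = h t" if "t \<in> I" for t
    using bracket_relation(1,3)[OF rel(1) that] bracket_relation(1,3)[OF rel(2) that]
      bracket_relation(1,3)[OF rel(3) that] by (auto intro: cross3_eqI)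
  have \<xi>: "cross3 (\<xi> x) (\<xi>' x) = \<xi> x" if "x \<in> J" for x
    using bracket_relation(2)[OF rel(1) that] bracket_relation(2)[OF rel(2) that]
      bracket_relation(2)[OF rel(3) that] by (auto intro: cross3_eqI)
  have "vf_eq_on I J U (lie_bracket (F 2) (F 3)) vzero"
    using \<tau> h \<xi> cross_eq_self(1) by (intro vertical_bracket_vanishes) (metis cross_zero_left)+
  then show ?thesis
    using assms by (simp add: so3_relations_def vf_eq_on_def)
qed

end

locale symmetric_triple = coefficient_triple +
  fixes g :: "real \<Rightarrow> real \<Rightarrow> real" and f :: fn3
  assumes smooth_g: "smooth3 I J U (\<lambda>t x u. g t x)" and smooth_f: "smooth3 I J U f"
    and g_x_nonzero: "\<And>t x u. t \<in> I \<Longrightarrow> x \<in> J \<Longrightarrow> u \<in> U \<Longrightarrow> Dx (\<lambda>t x u. g t x) t x u \<noteq> 0"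
    and f_uu_nonzero: "\<And>t x u. t \<in> I \<Longrightarrow> x \<in> J \<Longrightarrow> u \<in> U \<Longrightarrow> Du (Du f) t x u \<noteq> 0"
    and symmetric: "\<And>i. is_symmetry I J U g f (F i)"
begin

lemma ux_coefficient:
  assumes "t \<in> I" "x \<in> J" "u \<in> U"
  shows "h' t = g t x *\<^sub>R \<tau>' t + Dt (\<lambda>t x u. g t x) t x u *\<^sub>R \<tau> t + Dx (\<lambda>t x u. g t x) t x u *\<^sub>R \<xi> x"
  using symmetry_ux_coefficient[OF coeffs symmetric assms] by (simp add: vec_eq_iff mult.commute)

lemma ux_coefficient_Dx:
  assumes "t \<in> I" "x \<in> J" "u \<in> U"
  shows "Dx (Dt (\<lambda>t x u. g t x)) t x u *\<^sub>R \<tau> t + Dx (Dx (\<lambda>t x u. g t x)) t x u *\<^sub>R \<xi> x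
      + Dx (\<lambda>t x u. g t x) t x u *\<^sub>R (\<tau>' t + \<xi>' x) = 0"
  using symmetry_ux_coefficient_Dx[OF coeffs symmetric smooth_g open_J assms]
  by (simp add: vec_eq_iff mult.commute)

lemma free_term_Du:
  assumes "t \<in> I" "x \<in> J" "u \<in> U"
  shows "Du (Dt f) t x u *\<^sub>R \<tau> t + Du (Dx f) t x u *\<^sub>R \<xi> x + Du (Du f) t x u *\<^sub>R (u *\<^sub>R h t + r t x)
      + Du f t x u *\<^sub>R (\<tau>' t + \<xi>' x) = 0"
  using symmetry_free_term_Du[OF coeffs symmetric smooth_f open_U assms]
  by (simp add: vec_eq_iff mult.commute)

end

locale sl2_symmetric_triple = symmetric_triple +
  assumes sl2: "sl2_relations I J U (F 1) (F 2) (F 3)"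
begin

lemma sl2_bracket_relations:
  shows "vf_eq_on I J U (lie_bracket (F 1) (F 2)) (vscale 1 (F 1))"
    and "vf_eq_on I J U (lie_bracket (F 2) (F 3)) (vscale 1 (F 3))"
    and "vf_eq_on I J U (lie_bracket (F 1) (F 3)) (vscale 2 (F 2))"
  using sl2 by (simp_all add: sl2_relations_def vf_eq_on_vscale_one)

lemma tau_relation: "t \<in> I \<Longrightarrow> cross3 (\<tau> t) (\<tau>' t) = sl2_bracket_dual (\<tau> t)"
  and h_relation: "t \<in> I \<Longrightarrow> cross3 (\<tau> t) (h' t) = sl2_bracket_dual (h t)"
  and xi_relation: "x \<in> J \<Longrightarrow> cross3 (\<xi> x) (\<xi>' x) = sl2_bracket_dual (\<xi> x)"
  using bracket_relation[OF sl2_bracket_relations(1)] bracket_relation[OF sl2_bracket_relations(2)]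
    bracket_relation[OF sl2_bracket_relations(3)]
  by (auto simp: sl2_bracket_dual_def intro!: cross3_eqI) (metis minus_diff_eq)+

text \<open>Projecting the determining equations onto \<open>cross3 (\<tau> t) (\<xi> x)\<close>, which is orthogonal
  to \<open>\<tau> t\<close> and \<open>\<xi> x\<close>, leaves exactly the hypotheses of \<open>sl2_pointwise_h_eq_g_tau\<close>.\<close>

lemma h_eq_g_tau:
  assumes t: "t \<in> I" and x: "x \<in> J" and c_nonzero: "cross3 (\<tau> t) (\<xi> x) \<noteq> 0"
  shows "h t = g t x *\<^sub>R \<tau> t"
proof -
  obtain u\<^sub>0 where u\<^sub>0: "u\<^sub>0 \<in> U" using nonempty by blast
  define c where "c = cross3 (\<tau> t) (\<xi> x)"
  have c\<tau>: "c \<bullet> \<tau> t = 0" and c\<xi>: "c \<bullet> \<xi> x = 0" by (simp_all add: c_def dot_cross_self)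
  have "Dx (\<lambda>t x u. g t x) t x u\<^sub>0 * (c \<bullet> (\<tau>' t + \<xi>' x)) = 0"
    using arg_cong[OF ux_coefficient_Dx[OF t x u\<^sub>0], of "\<lambda>v. c \<bullet> v"] c\<tau> c\<xi>
    by (simp add: inner_add_right)
  then have cSY: "c \<bullet> (\<tau>' t + \<xi>' x) = 0" using g_x_nonzero[OF t x u\<^sub>0] by simp
  then have cS: "c \<bullet> \<tau>' t = - (c \<bullet> \<xi>' x)" by (simp add: inner_add_right)
  have cK: "c \<bullet> h' t = (c \<bullet> \<tau>' t) * g t x"
    using ux_coefficient[OF t x u\<^sub>0] c\<tau> c\<xi> by (simp add: inner_add_right)
  have "(c \<bullet> h t) * u + c \<bullet> r t x = 0" if u: "u \<in> U" for u
  proof -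
    have "Du (Du f) t x u * ((c \<bullet> h t) * u + c \<bullet> r t x) = 0"
      using arg_cong[OF free_term_Du[OF t x u], of "\<lambda>v. c \<bullet> v"] c\<tau> c\<xi> cS
      by (simp add: inner_add_right algebra_simps)
    then show ?thesis using f_uu_nonzero[OF t x u] by simp
  qed
  then have cH: "c \<bullet> h t = 0" by (rule affine_vanishing_on_open(1)[OF open_U nonempty(3)])
  show ?thesis
    using sl2_pointwise_h_eq_g_tau[OF tau_relation[OF t] xi_relation[OF x] h_relation[OF t] c_nonzero]
      cH cSY cK
    unfolding c_def .
qed

lemma tau_xi_parallel:
  assumes t: "t \<in> I" and x: "x \<in> J"
  shows "cross3 (\<tau> t) (\<xi> x) = 0"
proof (rule ccontr)
  assume nonzero: "cross3 (\<tau> t) (\<xi> x) \<noteq> 0"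
  obtain u\<^sub>0 where u\<^sub>0: "u\<^sub>0 \<in> U" using nonempty by blast
  have "isCont (\<lambda>y. cross3 (\<tau> t) (\<xi> y)) x"
    using DERIV_isCont[OF has_real_derivative_coeffs(3)[OF x]]
    by (intro continuous_cross continuous_const vec3_isCont)
  then obtain e where "e > 0" and e: "\<And>y. dist x y < e \<Longrightarrow> cross3 (\<tau> t) (\<xi> y) \<noteq> 0"
    using continuous_at_avoid[of x "\<lambda>y. cross3 (\<tau> t) (\<xi> y)" 0] nonzero by blast
  have g_const: "g t y = g t x" if y: "y \<in> J \<inter> ball x e" for y
  proof -
    have "y \<in> J" and "cross3 (\<tau> t) (\<xi> y) \<noteq> 0" using e y by simp_all
    then have "h t = g t y *\<^sub>R \<tau> t" by (rule h_eq_g_tau[OF t])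
    then have "g t y *\<^sub>R \<tau> t = g t x *\<^sub>R \<tau> t"
      by (simp only: flip: h_eq_g_tau[OF t x nonzero])
    moreover have "\<tau> t \<noteq> 0" using nonzero by auto
    ultimately show ?thesis by simp
  qed
  have "open (J \<inter> ball x e)" and "x \<in> J \<inter> ball x e" using \<open>e > 0\<close> open_J x by auto
  then have "Dx (\<lambda>t x u. g t x) t x u\<^sub>0 = 0"
    using DERIV_const_on_open[OF smooth3_has_derivative(2)[OF smooth_g t x u\<^sub>0]] g_const by blast
  then show False using g_x_nonzero[OF t x u\<^sub>0] by contradiction
qed

lemma tau_eq_0_if_parallel:
  assumes w: "w \<noteq> 0" and parallel: "\<And>s. s \<in> I \<Longrightarrow> cross3 (\<tau> s) w = 0" and t: "t \<in> I"
  shows "\<tau> t = 0"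
proof -
  have "cross3 (\<tau>' t) w = 0"
    by (rule vec3_DERIV_const_on_open[OF cross3_has_real_derivative_component open_I t parallel])
      (rule has_real_derivative_coeffs(1)[OF t])
  then have "cross3 (\<tau> t) (\<tau>' t) = 0" using cross_eq_0_common_factor parallel[OF t] w by blast
  then show ?thesis using tau_relation[OF t] by simp
qed

lemma xi_eq_0:
  assumes x: "x \<in> J"
  shows "\<xi> x = 0"
proof (rule ccontr)
  assume nonzero: "\<xi> x \<noteq> 0"
  have \<tau>: "\<tau> t = 0" if "t \<in> I" for t
    using tau_eq_0_if_parallel[OF nonzero tau_xi_parallel[OF _ x] that] .
  have h: "h t = 0" if "t \<in> I" for t
    using h_relation[OF that] \<tau>[OF that] by simp
  obtain t\<^sub>0 u\<^sub>0 where t\<^sub>0: "t\<^sub>0 \<in> I" and u\<^sub>0: "u\<^sub>0 \<in> U" using nonempty by blast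
  have "\<tau>' t\<^sub>0 = 0"
    by (rule vec3_DERIV_const_on_open[OF has_real_derivative_coeffs(1)[OF t\<^sub>0] open_I t\<^sub>0 \<tau>])
  moreover have "h' t\<^sub>0 = 0"
    by (rule vec3_DERIV_const_on_open[OF has_real_derivative_coeffs(2)[OF t\<^sub>0] open_I t\<^sub>0 h])
  ultimately have "Dx (\<lambda>t x u. g t x) t\<^sub>0 x u\<^sub>0 *\<^sub>R \<xi> x = 0"
    using ux_coefficient[OF t\<^sub>0 x u\<^sub>0] \<tau>[OF t\<^sub>0] by simp
  then show False using nonzero g_x_nonzero[OF t\<^sub>0 x u\<^sub>0] by simp
qed

lemma tau_eq_0:
  assumes t: "t \<in> I"
  shows "\<tau> t = 0"
proof -
  obtain x\<^sub>0 u\<^sub>0 where x\<^sub>0: "x\<^sub>0 \<in> J" and u\<^sub>0: "u\<^sub>0 \<in> U" using nonempty by blast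
  have "\<xi>' x\<^sub>0 = 0"
    by (rule vec3_DERIV_const_on_open[OF has_real_derivative_coeffs(3)[OF x\<^sub>0] open_J x\<^sub>0 xi_eq_0])
  then have \<tau>': "Dx (\<lambda>t x u. g t x) t x\<^sub>0 u\<^sub>0 *\<^sub>R \<tau>' t = - Dx (Dt (\<lambda>t x u. g t x)) t x\<^sub>0 u\<^sub>0 *\<^sub>R \<tau> t"
    using ux_coefficient_Dx[OF t x\<^sub>0 u\<^sub>0] xi_eq_0[OF x\<^sub>0] by (simp add: eq_neg_iff_add_eq_0 add.commute)
  have "Dx (\<lambda>t x u. g t x) t x\<^sub>0 u\<^sub>0 *\<^sub>R cross3 (\<tau> t) (\<tau>' t)
      = cross3 (\<tau> t) (Dx (\<lambda>t x u. g t x) t x\<^sub>0 u\<^sub>0 *\<^sub>R \<tau>' t)"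
    by (simp add: cross_mult_right)
  also have "\<dots> = 0" unfolding \<tau>' by (simp add: cross_mult_right)
  finally have "Dx (\<lambda>t x u. g t x) t x\<^sub>0 u\<^sub>0 *\<^sub>R cross3 (\<tau> t) (\<tau>' t) = 0" .
  then show ?thesis using tau_relation[OF t] g_x_nonzero[OF t x\<^sub>0 u\<^sub>0] by simp
qed

lemma first_field_vanishes: "vf_eq_on I J U (F 1) vzero"
proof -
  have "vf_eq_on I J U (lie_bracket (F 1) (F 2)) vzero"
    using tau_eq_0 h_relation xi_eq_0 by (intro vertical_bracket_vanishes) simp_all
  then show ?thesis using sl2 by (simp add: sl2_relations_def vf_eq_on_def)
qed

end

lemma admissible_coefficient_triple:
  assumes "open I" "open J" "open U" "I \<noteq> {}" "J \<noteq> {}" "U \<noteq> {}"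
    and "\<And>i. admissible_field I J U (F i)"
  obtains \<tau> \<tau>' \<xi> \<xi>' h h' r r\<^sub>t r\<^sub>x r\<^sub>t\<^sub>x
  where "coefficient_triple I J U F \<tau> \<tau>' \<xi> \<xi>' h h' r r\<^sub>t r\<^sub>x r\<^sub>t\<^sub>x"
proof -
  have "\<forall>i. \<exists>\<tau> \<tau>' \<xi> \<xi>' h h' r r\<^sub>t r\<^sub>x r\<^sub>t\<^sub>x.
      field_coeffs I J U (F i) \<tau> \<tau>' \<xi> \<xi>' h h' r r\<^sub>t r\<^sub>x r\<^sub>t\<^sub>x"
    using admissible_field_coeffs[OF assms] by blast
  then obtain \<tau> \<tau>' \<xi> \<xi>' h h' r r\<^sub>t r\<^sub>x r\<^sub>t\<^sub>x where
    "\<And>i. field_coeffs I J U (F i) (\<tau> i) (\<tau>' i) (\<xi> i) (\<xi>' i) (h i) (h' i) (r i) (r\<^sub>t i) (r\<^sub>x i) (r\<^sub>t\<^sub>x i)"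
    unfolding choice_iff by blast
  then have "coefficient_triple I J U F (\<lambda>t. \<chi> i. \<tau> i t) (\<lambda>t. \<chi> i. \<tau>' i t) (\<lambda>x. \<chi> i. \<xi> i x)
      (\<lambda>x. \<chi> i. \<xi>' i x) (\<lambda>t. \<chi> i. h i t) (\<lambda>t. \<chi> i. h' i t) (\<lambda>t x. \<chi> i. r i t x)
      (\<lambda>t x. \<chi> i. r\<^sub>t i t x) (\<lambda>t x. \<chi> i. r\<^sub>x i t x) (\<lambda>t x. \<chi> i. r\<^sub>t\<^sub>x i t x)"
    using assms(1-6) by unfold_locales simp_all
  then show thesis by (rule that)
qed

lemma lin_indep3_first_nonvanishing:
  assumes "lin_indep3 I J U P Q R" "I \<noteq> {}" "J \<noteq> {}" "U \<noteq> {}"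
  shows "\<not> vf_eq_on I J U P vzero"
proof
  assume "vf_eq_on I J U P vzero"
  then have "vf_eq_on I J U (vlin3 1 P 0 Q 0 R) vzero"
    by (simp add: vf_eq_on_def vlin3_def vzero_def vtau_def vxi_def veta_def)
  then show False using assms(1) unfolding lin_indep3_def by force
qed

theorem theorem6:
  fixes I J U :: "real set" and g :: "real \<Rightarrow> real \<Rightarrow> real" and f :: fn3
    and P Q R :: vfield
  assumes "open I" "is_interval I" "I \<noteq> {}"
    and "open J" "is_interval J" "J \<noteq> {}"
    and "open U" "is_interval U" "U \<noteq> {}"
    and "smooth3 I J U (\<lambda>t x u. g t x)" and "smooth3 I J U f"
    and "\<forall>t\<in>I. \<forall>x\<in>J. \<forall>u\<in>U. Dx (\<lambda>t x u. g t x) t x u \<noteq> 0"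
    and "\<forall>t\<in>I. \<forall>x\<in>J. \<forall>u\<in>U. Du (Du f) t x u \<noteq> 0"
    and "admissible_field I J U P" "admissible_field I J U Q" "admissible_field I J U R"
    and "is_symmetry I J U g f P" "is_symmetry I J U g f Q" "is_symmetry I J U g f R"
    and "lin_indep3 I J U P Q R"
  shows "\<not> so3_relations I J U P Q R \<and> \<not> sl2_relations I J U P Q R"
proof -
  define F where "F i = (if i = 1 then P else if i = 2 then Q else R)" for i :: 3
  have F: "F 1 = P" "F 2 = Q" "F 3 = R" by (simp_all add: F_def)
  have "admissible_field I J U (F i)" for i using assms(14-16) by (simp add: F_def)
  then obtain \<tau> \<tau>' \<xi> \<xi>' h h' r r\<^sub>t r\<^sub>x r\<^sub>t\<^sub>x
    where coeffs: "coefficient_triple I J U F \<tau> \<tau>' \<xi> \<xi>' h h' r r\<^sub>t r\<^sub>x r\<^sub>t\<^sub>x"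
    using admissible_coefficient_triple[OF assms(1,4,7,3,6,9)] by blast
  have P_nonvanishing: "\<not> vf_eq_on I J U P vzero"
    using lin_indep3_first_nonvanishing assms(3,6,9,20) by blast
  show ?thesis
  proof (intro conjI notI)
    assume "so3_relations I J U P Q R"
    then show False
      using coefficient_triple.so3_first_field_vanishes[OF coeffs] P_nonvanishing F by simp
  next
    assume "sl2_relations I J U P Q R"
    with coeffs have "sl2_symmetric_triple I J U F \<tau> \<tau>' \<xi> \<xi>' h h' r r\<^sub>t r\<^sub>x r\<^sub>t\<^sub>x g f"
      using assms(10-13,17-19)
      by (simp add: sl2_symmetric_triple_def sl2_symmetric_triple_axioms_def symmetric_triple_def
          symmetric_triple_axioms_def F_def)
    then show False
      using sl2_symmetric_triple.first_field_vanishes P_nonvanishing F by metis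
  qed
qed

end
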